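(* Let $N$ and $i$ be positive integers such that $N$ is a multiple of both $i$ and $i+1$, and let $q$ be an integer with $N/(i+1)<q\le N/i$ (necessarily $q\ge 2$). Then the map $$F_i\to F_N^{1/q,\,1/(q-1)},\qquad \frac{h}{k}\mapsto \frac{k}{kq-h}$$ (with $h/k$ in lowest terms) is a well-defined, order-preserving bijection.
   Context: For a positive integer $N$, the Farey sequence of order $N$, $F_N$, is the increasing list of all reduced fractions $h/k$ with $0\le h\le k\le N$ and $\gcd(h,k)=1$; it begins with $0/1$ and ends with $1/1$. For integers $1\le b\le a\le N$, $F_N^{1/a,\,1/b}$ denotes the subsequence of $F_N$ consisting of all its fractions lying in the closed interval $[1/a,\,1/b]$. *)

theory Defs
  imports Complex_Main
begin

text \<open>Farey sequence of order N, as the set of rationals h/k in [0,1] whose reduced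
  denominator k is at most N (ordered by the usual order on rat).\<close>
definition farey :: "nat \<Rightarrow> rat set" where
  "farey N = {r. 0 \<le> r \<and> r \<le> 1 \<and> snd (quotient_of r) \<le> int N}"

definition farey_sub :: "nat \<Rightarrow> int \<Rightarrow> int \<Rightarrow> rat set" where
  "farey_sub N a b = {r \<in> farey N. 1 / of_int a \<le> r \<and> r \<le> 1 / of_int b}"

definition farey_map :: "int \<Rightarrow> rat \<Rightarrow> rat" where
  "farey_map q r = (case quotient_of r of (h, k) \<Rightarrow> of_int k / of_int (k * q - h))"

end

theory Submission imports Defs begin

(* The map r = h/k |-> k/(kq - h) equals r |-> 1/(q - r), a strictly increasing
   function on [0,1] when q >= 2, sending [0,1] onto [1/q, 1/(q-1)].  Since gcd(k, kq-h)
   = gcd(k,h) = 1, the reduced denominator of the image is kq - h. *)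

lemma quotient_of_reduced:
  assumes "0 < k" and "coprime h k"
  shows "quotient_of (of_int h / of_int k :: rat) = (h, k)"
  using assms by (simp add: Fract_of_int_quotient[symmetric] quotient_of_Fract)

lemma coprime_mult_sub: "coprime (h::int) k \<Longrightarrow> coprime k (k*q - h)"
  by (smt (verit, ccfv_SIG) coprime_imp_coprime dvd_add_right_iff dvd_mult2)

lemma coprime_sub_mult: "coprime (b::int) a \<Longrightarrow> coprime (q*a - b) a"
  by (metis coprime_commute coprime_mult_sub mult.commute)

lemma farey_range: "r \<in> farey N \<Longrightarrow> 0 \<le> r \<and> r \<le> 1"
  by (simp add: farey_def)

lemma farey_map_reduced:
  assumes hk: "quotient_of r = (h, k)" and r: "0 \<le> r" "r \<le> 1" and q: "2 \<le> q"
  shows "farey_map q r = 1 / (of_int q - r)"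
    and "quotient_of (farey_map q r) = (k, k*q - h)"
proof -
  have k: "0 < k" and cop: "coprime h k" and r_eq: "r = of_int h / of_int k"
    using hk quotient_of_denom_pos quotient_of_coprime quotient_of_div by blast+
  have "h \<le> k" using r r_eq k by (simp add: divide_le_eq_1)
  moreover have "k * 2 \<le> k * q" using q k by simp
  ultimately have pos: "0 < k*q - h" using k by linarith
  have map_eq: "farey_map q r = of_int k / of_int (k*q - h)"
    by (simp add: farey_map_def hk)
  also have "\<dots> = 1 / (of_int q - r)"
    using k pos unfolding r_eq by (simp add: field_simps)
  finally show "farey_map q r = 1 / (of_int q - r)" .
  show "quotient_of (farey_map q r) = (k, k*q - h)"
    unfolding map_eq by (rule quotient_of_reduced[OF pos coprime_mult_sub[OF cop]])
qed

lemma farey_map_formula: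
  "r \<in> farey i \<Longrightarrow> 2 \<le> q \<Longrightarrow> farey_map q r = 1 / (of_int q - r)"
  by (metis farey_map_reduced(1) farey_range prod.exhaust)

lemma farey_map_strict_mono:
  assumes "2 \<le> q"
  shows "strict_mono_on (farey i) (farey_map q)"
proof (rule strict_mono_onI)
  fix r s assume r: "r \<in> farey i" and s: "s \<in> farey i" and "r < s"
  moreover have "s < of_int q" using farey_range[OF s] assms by linarith
  ultimately show "farey_map q r < farey_map q s"
    using assms by (simp add: farey_map_formula frac_less2)
qed

lemma farey_map_into:
  assumes q: "2 \<le> q" and iq: "int i * q \<le> int N"
  shows "farey_map q ` farey i \<subseteq> farey_sub N q (q - 1)"
proof
  fix s assume "s \<in> farey_map q ` farey i"
  then obtain r where r: "r \<in> farey i" and s: "s = farey_map q r" by blast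
  obtain h k where hk: "quotient_of r = (h, k)" by fastforce
  have r01: "0 \<le> r" "r \<le> 1" using farey_range[OF r] by auto
  have qq: "(2::rat) \<le> of_int q" using q by simp
  have s_eq: "s = 1 / (of_int q - r)" using farey_map_reduced(1)[OF hk r01 q] s by simp
  have lower: "1 / of_int q \<le> s" unfolding s_eq using r01 qq by (intro divide_left_mono) auto
  have upper: "s \<le> 1 / of_int (q - 1)" unfolding s_eq using r01 qq by (intro divide_left_mono) auto
  have "1 / rat_of_int (q - 1) \<le> 1" using qq by (simp add: divide_le_eq_1)
  hence le1: "s \<le> 1" using upper by linarith
  have ge0: "0 \<le> s" using r01 qq unfolding s_eq by simp
  have "k \<le> int i" using r hk by (simp add: farey_def)
  hence "k * q \<le> int i * q" using q by (simp add: mult_right_mono)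
  moreover have "0 \<le> h"
  proof -
    have "0 < k" "r = of_int h / of_int k" using hk quotient_of_denom_pos quotient_of_div by blast+
    thus ?thesis using r01(1) by (simp add: zero_le_divide_iff)
  qed
  ultimately have "k * q - h \<le> int N" using iq by linarith
  hence "snd (quotient_of s) \<le> int N" using farey_map_reduced(2)[OF hk r01 q] s by simp
  thus "s \<in> farey_sub N q (q - 1)" using lower upper le1 ge0
    by (simp add: farey_sub_def farey_def)
qed

(* Arithmetic core of surjectivity: a reduced a/b <= 1/(q-1) with b <= N <= (i+1)(q-1)
   has numerator a <= i.  Equality b = a(q-1) forces a = 1; otherwise b > (i+1)(q-1). *)
lemma numerator_bound:
  fixes a b q :: int and i N :: nat
  assumes cop: "coprime a b" and a: "0 < a" and ab: "a * (q - 1) \<le> b"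
    and bN: "b \<le> int N" and Nq: "int N \<le> (int i + 1) * (q - 1)" and i: "0 < i"
  shows "a \<le> int i"
proof (rule ccontr)
  assume "\<not> a \<le> int i"
  hence ai: "int i + 1 \<le> a" by simp
  show False
  proof (cases "b = a * (q - 1)")
    case True
    hence "a dvd b" by simp
    hence "a = 1" using cop a coprime_common_divisor_int[of a b a] by simp
    thus False using ai i by simp
  next
    case False
    hence "a * (q - 1) < b" using ab by simp
    moreover have "q - 1 \<ge> 0"
      using Nq by (smt (verit) mult_pos_neg of_nat_0_le_iff)
    hence "(int i + 1) * (q - 1) \<le> a * (q - 1)" using ai by (simp add: mult_right_mono)
    ultimately show False using bN Nq by linarith
  qed
qed

(* If N <= (i+1)(q-1), every a/b in F_N^{1/q,1/(q-1)} is the image of (qa - b)/a in F_i. *)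
lemma farey_map_onto:
  assumes q: "2 \<le> q" and Nq: "int N \<le> (int i + 1) * (q - 1)" and i: "0 < i"
  shows "farey_sub N q (q - 1) \<subseteq> farey_map q ` farey i"
proof
  fix s assume s: "s \<in> farey_sub N q (q - 1)"
  obtain a b where ab: "quotient_of s = (a, b)" by fastforce
  have b: "0 < b" and cop: "coprime a b" and s_eq: "s = of_int a / of_int b"
    using ab quotient_of_denom_pos quotient_of_coprime quotient_of_div by blast+
  have lower: "1 / of_int q \<le> s" and upper: "s \<le> 1 / of_int (q - 1)" and bN: "b \<le> int N"
    using s ab by (auto simp: farey_sub_def farey_def)
  have "0 < 1 / rat_of_int q" using q by simp
  hence "0 < s" using lower by linarith
  hence a: "0 < a" using s_eq b by (simp add: zero_less_divide_iff)
  have "rat_of_int b \<le> rat_of_int (a * q)" using lower s_eq a b q by (simp add: field_simps)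
  hence bq: "b \<le> a * q" by (simp only: of_int_le_iff)
  have "rat_of_int (a * (q - 1)) \<le> rat_of_int b" using upper s_eq a b q by (simp add: field_simps)
  hence bq1: "a * (q - 1) \<le> b" by (simp only: of_int_le_iff)
  define r where "r = of_int (q*a - b) / (of_int a :: rat)"
  have qr: "quotient_of r = (q*a - b, a)" unfolding r_def
    by (rule quotient_of_reduced[OF a coprime_sub_mult]) (simp add: cop coprime_commute)
  have "rat_of_int b \<le> rat_of_int (a * q)" "rat_of_int (a * q) \<le> rat_of_int (a + b)"
    using bq bq1 by (simp only: of_int_le_iff; simp add: algebra_simps)+
  hence "0 \<le> r" "r \<le> 1" unfolding r_def using a by (auto simp: field_simps)
  moreover have "a \<le> int i" by (rule numerator_bound[OF cop a bq1 bN Nq i])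
  ultimately have rf: "r \<in> farey i" using qr by (simp add: farey_def)
  have "1 / (rat_of_int q - rat_of_int (q*a - b) / of_int a) = of_int a / of_int b"
    using a b by (simp add: field_simps)
  hence "farey_map q r = s" using farey_map_formula[OF rf q] s_eq r_def by simp
  thus "s \<in> farey_map q ` farey i" using rf by blast
qed

lemma farey_map_bij:
  assumes i: "0 < i" and N: "0 < N"
    and iq: "int i * q \<le> int N" and Nq: "int N \<le> (int i + 1) * (q - 1)"
  shows "bij_betw (farey_map q) (farey i) (farey_sub N q (q - 1))
         \<and> strict_mono_on (farey i) (farey_map q)"
proof -
  have "2 \<le> q" using N Nq by (smt (verit) mult_nonneg_nonpos of_nat_0_less_iff of_nat_0_le_iff)
  hence mono: "strict_mono_on (farey i) (farey_map q)" by (rule farey_map_strict_mono)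
  have "farey_map q ` farey i = farey_sub N q (q - 1)"
    using farey_map_into[OF \<open>2 \<le> q\<close> iq] farey_map_onto[OF \<open>2 \<le> q\<close> Nq i] by blast
  thus ?thesis using mono strict_mono_on_imp_inj_on by (auto simp: bij_betw_def)
qed

(* When i+1 divides N, the bound N/(i+1) < q means N/(i+1) <= q - 1. *)
lemma lower_bound_to_int:
  assumes "(i + 1) dvd N" and "of_nat N / of_nat (i + 1) < (of_int q :: rat)"
  shows "int N \<le> (int i + 1) * (q - 1)"
proof -
  obtain m where m: "N = (i + 1) * m" using assms(1) by blast
  have "of_nat N / of_nat (i + 1) = (of_nat m :: rat)"
    unfolding m of_nat_mult by (simp add: nonzero_mult_div_cancel_left del: of_nat_Suc)
  hence "int m < q" using assms(2) by simp
  hence "(int i + 1) * int m \<le> (int i + 1) * (q - 1)" by (intro mult_left_mono) auto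
  thus ?thesis unfolding m by (simp add: algebra_simps)
qed

lemma upper_bound_to_int:
  assumes "0 < i" and "(of_int q :: rat) \<le> of_nat N / of_nat i"
  shows "int i * q \<le> int N"
proof -
  have "rat_of_int (int i * q) \<le> rat_of_int (int N)"
    using assms by (simp add: field_simps)
  thus ?thesis by (simp only: of_int_le_iff)
qed

theorem theorem2:
  fixes N i :: nat and q :: int
  assumes "0 < N" and "0 < i" and "i dvd N" and "(i + 1) dvd N"
    and "of_nat N / of_nat (i + 1) < (of_int q :: rat)"
    and "(of_int q :: rat) \<le> of_nat N / of_nat i"
  shows "bij_betw (farey_map q) (farey i) (farey_sub N q (q - 1))
         \<and> strict_mono_on (farey i) (farey_map q)"
proof (rule farey_map_bij)
  show "int i * q \<le> int N" using upper_bound_to_int[OF assms(2,6)] .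
  show "int N \<le> (int i + 1) * (q - 1)" using lower_bound_to_int[OF assms(4,5)] .
qed (use assms in auto)

end
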